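(* Let $\ell \geq 1$ be an integer and let $H_\ell$ be the graph defined in the context. Then every path in $H_\ell$ has length (number of edges) at most $2\ell^2+4\ell+7$.
   Context: For an integer $\ell\ge 1$, $H_\ell$ is the graph with vertex set $V_\ell=\{v_{h,j} : h\in\{-\ell,\dots,\ell\},\ j\in\{1,\dots,2^{\ell-|h|}\}\}$ and with the following edges: (1) $v_{h,j}v_{h-1,2j-1}$ and $v_{h,j}v_{h-1,2j}$ for every $h\in\{1,\dots,\ell\}$ and $j\in\{1,\dots,2^{\ell-h}\}$; (2) $v_{h,j}v_{h+1,2j-1}$ and $v_{h,j}v_{h+1,2j}$ for every $h\in\{-\ell,\dots,-1\}$ and $j\in\{1,\dots,2^{\ell-|h|}\}$; (3) the edge $v_{\ell,1}v_{-\ell,1}$; (4) the edges $v_{0,2j-1}v_{0,2j}$ for every $j\in\{1,\dots,2^{\ell-1}\}$. Thus $H_\ell$ consists of two complete binary trees of height $\ell$ (rooted at $v_{\ell,1}$ and $v_{-\ell,1}$) whose leaves $v_{0,j}$ are identified, plus an edge between the roots and a perfect matching on consecutive leaves. *)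

theory Defs
  imports Main
begin

text \<open>Vertex v_{h,j} of H_l is represented by the pair (h, j) :: int \<times> nat.\<close>

definition H_vert :: "nat \<Rightarrow> (int \<times> nat) set" where
  "H_vert l = {(h, j). - int l \<le> h \<and> h \<le> int l \<and> 1 \<le> j \<and> j \<le> 2 ^ (l - nat \<bar>h\<bar>)}"

text \<open>Directed generating edges (1)-(4); the graph is their symmetric closure.\<close>
definition H_arc :: "nat \<Rightarrow> int \<times> nat \<Rightarrow> int \<times> nat \<Rightarrow> bool" where
  "H_arc l u v \<longleftrightarrow>
     (\<exists>h j. 1 \<le> h \<and> h \<le> int l \<and> 1 \<le> j \<and> j \<le> 2 ^ (l - nat h) \<and> u = (h, j) \<and>
            (v = (h - 1, 2 * j - 1) \<or> v = (h - 1, 2 * j))) \<or>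
     (\<exists>h j. - int l \<le> h \<and> h \<le> -1 \<and> 1 \<le> j \<and> j \<le> 2 ^ (l - nat \<bar>h\<bar>) \<and> u = (h, j) \<and>
            (v = (h + 1, 2 * j - 1) \<or> v = (h + 1, 2 * j))) \<or>
     (u = (int l, 1) \<and> v = (- int l, 1)) \<or>
     (\<exists>j. 1 \<le> j \<and> j \<le> 2 ^ (l - 1) \<and> u = (0, 2 * j - 1) \<and> v = (0, 2 * j))"

definition H_adj :: "nat \<Rightarrow> int \<times> nat \<Rightarrow> int \<times> nat \<Rightarrow> bool" where
  "H_adj l u v \<longleftrightarrow> H_arc l u v \<or> H_arc l v u"

text \<open>A path is a nonempty list of pairwise distinct vertices, consecutive ones adjacent.
  Its length is the number of edges, i.e. length of the list minus one.\<close>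
definition H_path :: "nat \<Rightarrow> (int \<times> nat) list \<Rightarrow> bool" where
  "H_path l p \<longleftrightarrow> p \<noteq> [] \<and> distinct p \<and> set p \<subseteq> H_vert l \<and>
     (\<forall>i. Suc i < length p \<longrightarrow> H_adj l (p ! i) (p ! Suc i))"

end

theory Submission
  imports Defs
begin

(* Call block h j the union of the subtree of height h below v_{h,j} and the subtree above
   v_{-h,j}; the two share their 2^h leaves, and block (h+1) j consists of its two roots and
   the two disjoint blocks of height h below them. For h >= 1 every edge leaving a block
   ends in one of the two roots of its parent block, because the leaf matching only joins
   siblings. A path with no endpoint in a block therefore enters it right after it first
   meets these two roots and leaves it through the other one, so it cannot visit both of
   two sibling blocks. Counting the vertices of a path in a block of height h according to
   the number e of its endpoints lying there gives b_0(h+1) <= 2 + b_0(h) and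
   b_e(h+1) <= 2 + max {b_e1(h) + b_e2(h) | e1 + e2 <= e} for e >= 1, whence at most
   2h^2 + 2h + 2 vertices; for h = l the block is the whole graph. *)

lemma first_entry_last_exit:
  assumes ends: "hd p \<notin> C" "last p \<notin> C" and visits: "set p \<inter> C \<noteq> {}"
  obtains a b where "0 < a" "a \<le> b" "Suc b < length p" "p ! a \<in> C" "p ! b \<in> C"
    "p ! (a - 1) \<notin> C" "p ! Suc b \<notin> C"
proof -
  define I where "I = {i. i < length p \<and> p ! i \<in> C}"
  define a b where "a = Min I" and "b = Max I"
  have "finite I" by (simp add: I_def)
  moreover have "I \<noteq> {}" using visits by (auto simp: I_def in_set_conv_nth)
  ultimately have "a \<in> I" "b \<in> I" "a \<le> b" by (simp_all add: a_def b_def)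
  then have a: "a < length p" "p ! a \<in> C" and b: "b < length p" "p ! b \<in> C"
    by (simp_all add: I_def)
  have "p \<noteq> []" using visits by auto
  have "a \<noteq> 0"
  proof
    assume "a = 0"
    then show False using a ends(1) \<open>p \<noteq> []\<close> by (simp add: hd_conv_nth)
  qed
  have "b \<noteq> length p - 1" using b ends(2) \<open>p \<noteq> []\<close> by (auto simp: last_conv_nth)
  then have "Suc b < length p" using b(1) by arith
  have "p ! (a - 1) \<notin> C"
  proof
    assume "p ! (a - 1) \<in> C"
    then have "a - 1 \<in> I" using a(1) by (simp add: I_def)
    then have "a \<le> a - 1" using \<open>finite I\<close> by (simp add: a_def)
    then show False using \<open>a \<noteq> 0\<close> by simp
  qed
  moreover have "p ! Suc b \<notin> C"
  proof
    assume "p ! Suc b \<in> C"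
    then have "Suc b \<in> I" using \<open>Suc b < length p\<close> by (simp add: I_def)
    then have "Suc b \<le> b" using \<open>finite I\<close> by (simp add: b_def)
    then show False by simp
  qed
  ultimately show thesis using that \<open>a \<noteq> 0\<close> \<open>a \<le> b\<close> \<open>Suc b < length p\<close> a(2) b(2) by blast
qed

lemma path_enters_after_first_boundary_vertex:
  fixes p :: "'a list"
  assumes dist: "distinct p"
    and adj: "\<And>i. Suc i < length p \<Longrightarrow> adj (p ! i) (p ! Suc i)"
    and boundary: "\<And>v w. v \<in> C \<Longrightarrow> w \<notin> C \<Longrightarrow> adj v w \<or> adj w v \<Longrightarrow> w \<in> {s, t}"
    and ends: "hd p \<notin> C" "last p \<notin> C"
    and visits: "set p \<inter> C \<noteq> {}"
  obtains i where "Suc i < length p" "p ! i \<in> {s, t}" "\<forall>k<i. p ! k \<notin> {s, t}" "p ! Suc i \<in> C"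
proof -
  obtain a b where ab: "0 < a" "a \<le> b" "Suc b < length p" "p ! a \<in> C" "p ! b \<in> C"
    and outside: "p ! (a - 1) \<notin> C" "p ! Suc b \<notin> C"
    using first_entry_last_exit[OF ends visits] by blast
  have s_before: "p ! (a - 1) \<in> {s, t}"
    using boundary[OF ab(4) outside(1)] adj[of "a - 1"] ab(1-3) by simp
  have s_after: "p ! Suc b \<in> {s, t}"
    using boundary[OF ab(5) outside(2)] adj[of b] ab(3) by simp
  have "p ! (a - 1) \<noteq> p ! Suc b"
    using dist ab(2,3) by (simp add: nth_eq_iff_index_eq)
  then have "{s, t} = {p ! (a - 1), p ! Suc b}" using s_before s_after by auto
  then have "\<forall>k<a - 1. p ! k \<notin> {s, t}"
    using dist ab(2,3) by (auto simp: nth_eq_iff_index_eq)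
  moreover have "Suc (a - 1) < length p" "p ! Suc (a - 1) \<in> C"
    using ab(1-4) by simp_all
  ultimately show thesis using that s_before by blast
qed

(* (k, i) lies in block g c iff its ancestor on level g (or -g) is the c-th vertex there;
   membership only depends on |k|. *)
definition block :: "nat \<Rightarrow> nat \<Rightarrow> (int \<times> nat) set" where
  "block g c = {(k, i). nat \<bar>k\<bar> \<le> g \<and> 1 \<le> i \<and> (i - 1) div 2 ^ (g - nat \<bar>k\<bar>) = c - 1}"

definition block_roots :: "nat \<Rightarrow> nat \<Rightarrow> (int \<times> nat) set" where
  "block_roots h j = {(int h, j), (- int h, j)}"

lemma mem_block [simp]:
  "(k, i) \<in> block g c \<longleftrightarrow> nat \<bar>k\<bar> \<le> g \<and> 1 \<le> i \<and> (i - 1) div 2 ^ (g - nat \<bar>k\<bar>) = c - 1"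
  by (simp add: block_def)

lemma half_eq_iff_child_index:
  fixes r j :: nat
  assumes "1 \<le> j"
  shows "r div 2 = j - 1 \<longleftrightarrow> r = (2 * j - 1) - 1 \<or> r = 2 * j - 1"
  using assms by auto

lemma child_index_div2:
  fixes c j :: nat
  assumes "1 \<le> j" "c = 2 * j - 1 \<or> c = 2 * j"
  shows "(c - 1) div 2 = j - 1"
  using assms by auto

lemma block_zero: "1 \<le> j \<Longrightarrow> block 0 j = {(0, j)}"
  by auto

lemma block_Suc:
  assumes "1 \<le> j"
  shows "block (Suc g) j = block_roots (Suc g) j \<union> block g (2 * j - 1) \<union> block g (2 * j)"
proof (intro set_eqI iffI)
  fix x assume x: "x \<in> block (Suc g) j"
  obtain k i where [simp]: "x = (k, i)" by fastforce
  show "x \<in> block_roots (Suc g) j \<union> block g (2 * j - 1) \<union> block g (2 * j)"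
  proof (cases "nat \<bar>k\<bar> = Suc g")
    case True
    then show ?thesis using x assms by (auto simp: block_roots_def)
  next
    case False
    then have "nat \<bar>k\<bar> \<le> g" using x by auto
    then have "Suc g - nat \<bar>k\<bar> = Suc (g - nat \<bar>k\<bar>)" by (simp add: Suc_diff_le)
    then show ?thesis using x False half_eq_iff_child_index[OF assms]
      by (simp add: power_Suc2 div_mult2_eq del: power_Suc)
  qed
next
  fix x assume x: "x \<in> block_roots (Suc g) j \<union> block g (2 * j - 1) \<union> block g (2 * j)"
  obtain k i where [simp]: "x = (k, i)" by fastforce
  show "x \<in> block (Suc g) j"
  proof (cases "x \<in> block_roots (Suc g) j")
    case True
    then show ?thesis using assms by (auto simp: block_roots_def)
  next
    case False
    then have "nat \<bar>k\<bar> \<le> g" using x by auto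
    then have "Suc g - nat \<bar>k\<bar> = Suc (g - nat \<bar>k\<bar>)" by (simp add: Suc_diff_le)
    then show ?thesis using x False half_eq_iff_child_index[OF assms]
      by (auto simp: power_Suc2 div_mult2_eq simp del: power_Suc)
  qed
qed

lemma block_children_disjoint: "1 \<le> j \<Longrightarrow> block g (2 * j - 1) \<inter> block g (2 * j) = {}"
  by auto

lemma block_roots_disjoint: "block_roots (Suc g) j \<inter> block g c = {}"
  by (auto simp: block_roots_def)

lemma H_vert_subset_block: "H_vert l \<subseteq> block l 1"
  by (auto simp: H_vert_def)

lemma block_step_iff:
  assumes "1 \<le> nat \<bar>k\<bar>" "nat \<bar>k\<bar> \<le> g" "nat \<bar>k'\<bar> = nat \<bar>k\<bar> - 1"
    and "1 \<le> j" "c' = 2 * j - 1 \<or> c' = 2 * j"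
  shows "(k', c') \<in> block g c \<longleftrightarrow> (k, j) \<in> block g c"
proof -
  have "g - nat \<bar>k'\<bar> = Suc (g - nat \<bar>k\<bar>)" using assms(1-3) by arith
  then have "(c' - 1) div 2 ^ (g - nat \<bar>k'\<bar>) = (j - 1) div 2 ^ (g - nat \<bar>k\<bar>)"
    using child_index_div2[OF assms(4,5)] by (simp add: div_mult2_eq)
  moreover have "nat \<bar>k'\<bar> \<le> g" using assms(2,3) by arith
  moreover have "1 \<le> c'" using assms(4,5) by auto
  ultimately show ?thesis using assms(2,4) by simp
qed

lemma tree_step_block_cases:
  assumes "1 \<le> nat \<bar>k\<bar>" "nat \<bar>k'\<bar> = nat \<bar>k\<bar> - 1"
    and "1 \<le> j" "c' = 2 * j - 1 \<or> c' = 2 * j"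
    and "1 \<le> m" "c = 2 * m - 1 \<or> c = 2 * m"
  shows "((k', c') \<in> block g c \<longleftrightarrow> (k, j) \<in> block g c) \<or> (nat \<bar>k\<bar> = Suc g \<and> j = m)"
proof (cases "nat \<bar>k\<bar> \<le> g")
  case True
  then show ?thesis using block_step_iff assms(1-4) by blast
next
  case False
  have "j = m" if "(k', c') \<in> block g c" "nat \<bar>k\<bar> = Suc g"
  proof -
    have "c' - 1 = c - 1" using that assms(2) by simp
    moreover have "1 \<le> c'" "1 \<le> c" using assms(3-6) by auto
    ultimately have "c' = c" by arith
    then show ?thesis
      using child_index_div2[OF assms(3,4)] child_index_div2[OF assms(5,6)] assms(3,5) by simp
  qed
  moreover have "(k', c') \<notin> block g c" if "nat \<bar>k\<bar> \<noteq> Suc g"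
    using that False assms(2) by auto
  ultimately show ?thesis using False by auto
qed

lemma H_arc_block_cases:
  assumes arc: "H_arc l x y" and "1 \<le> g" "1 \<le> m" "c = 2 * m - 1 \<or> c = 2 * m"
  shows "(x \<in> block g c \<longleftrightarrow> y \<in> block g c) \<or> x \<in> block_roots (Suc g) m"
proof -
  from arc consider
      (down) h j c' where "1 \<le> h" "1 \<le> j" "c' = 2 * j - 1 \<or> c' = 2 * j" "x = (h, j)" "y = (h - 1, c')"
    | (up) h j c' where "h \<le> -1" "1 \<le> j" "c' = 2 * j - 1 \<or> c' = 2 * j" "x = (h, j)" "y = (h + 1, c')"
    | (root) "x = (int l, 1)" "y = (- int l, 1)"
    | (leaf) j where "1 \<le> j" "x = (0, 2 * j - 1)" "y = (0, 2 * j)"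
    unfolding H_arc_def by blast
  then show ?thesis
  proof cases
    case (down h j c')
    have "nat \<bar>h - 1\<bar> = nat \<bar>h\<bar> - 1" "1 \<le> nat \<bar>h\<bar>" using down(1) by auto
    from tree_step_block_cases[OF this(2,1) down(2,3) assms(3,4), of g]
    show ?thesis using down(1,4,5) by (auto simp: block_roots_def)
  next
    case (up h j c')
    have "nat \<bar>h + 1\<bar> = nat \<bar>h\<bar> - 1" "1 \<le> nat \<bar>h\<bar>" using up(1) by auto
    from tree_step_block_cases[OF this(2,1) up(2,3) assms(3,4), of g]
    show ?thesis using up(1,4,5) by (auto simp: block_roots_def)
  next
    case root
    then show ?thesis by simp
  next
    case (leaf j)
    \<comment> \<open>the matched leaves are the two children of v_{1,j}\<close>
    have "(0, c') \<in> block g c \<longleftrightarrow> (1, j) \<in> block g c" if "c' = 2 * j - 1 \<or> c' = 2 * j" for c'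
      by (rule block_step_iff) (use assms(2) leaf(1) that in auto)
    then show ?thesis using leaf(2,3) by blast
  qed
qed

lemma H_adj_leaving_block:
  assumes "H_adj l v w" "v \<in> block g c" "w \<notin> block g c"
    and "1 \<le> g" "1 \<le> m" "c = 2 * m - 1 \<or> c = 2 * m"
  shows "w \<in> block_roots (Suc g) m"
  using assms H_arc_block_cases[of l v w g m c] H_arc_block_cases[of l w v g m c]
    block_roots_disjoint[of g m c]
  unfolding H_adj_def by blast

lemma H_path_avoids_a_sibling_block:
  assumes path: "H_path l p" and "1 \<le> g" "1 \<le> m"
    and ends: "hd p \<notin> block g (2 * m - 1) \<union> block g (2 * m)"
      "last p \<notin> block g (2 * m - 1) \<union> block g (2 * m)"
  shows "set p \<inter> block g (2 * m - 1) = {} \<or> set p \<inter> block g (2 * m) = {}"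
proof (rule ccontr)
  assume both: "\<not> ?thesis"
  have dist: "distinct p" and adj: "\<And>i. Suc i < length p \<Longrightarrow> H_adj l (p ! i) (p ! Suc i)"
    using path by (auto simp: H_path_def)
  let ?R = "{(int (Suc g), m), (- int (Suc g), m)}"
  have enters: "\<exists>i. Suc i < length p \<and> p ! i \<in> ?R \<and> (\<forall>k<i. p ! k \<notin> ?R) \<and> p ! Suc i \<in> block g c"
    if "c = 2 * m - 1 \<or> c = 2 * m" "set p \<inter> block g c \<noteq> {}" for c
  proof -
    have "w \<in> ?R" if "v \<in> block g c" "w \<notin> block g c" "H_adj l v w \<or> H_adj l w v" for v w
      using H_adj_leaving_block[of l v w g c m] that \<open>1 \<le> g\<close> \<open>1 \<le> m\<close> \<open>c = 2 * m - 1 \<or> c = 2 * m\<close>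
      unfolding block_roots_def H_adj_def by blast
    then show ?thesis
      using path_enters_after_first_boundary_vertex[where adj = "H_adj l", OF dist adj, of "block g c"]
        ends that(1,2) by blast
  qed
  obtain i where i: "p ! i \<in> ?R" "\<forall>k<i. p ! k \<notin> ?R" "p ! Suc i \<in> block g (2 * m - 1)"
    using enters[of "2 * m - 1"] both by blast
  obtain i' where i': "p ! i' \<in> ?R" "\<forall>k<i'. p ! k \<notin> ?R" "p ! Suc i' \<in> block g (2 * m)"
    using enters[of "2 * m"] both by blast
  have "i = i'" using i(1,2) i'(1,2) by (meson linorder_neqE_nat)
  then show False using i(3) i'(3) block_children_disjoint[OF \<open>1 \<le> m\<close>, of g] by blast
qed

lemma card_Int_block_Suc_le:
  assumes "1 \<le> j"
  shows "card (A \<inter> block (Suc g) j) \<le> 2 + card (A \<inter> block g (2 * j - 1)) + card (A \<inter> block g (2 * j))"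
proof -
  let ?R = "A \<inter> block_roots (Suc g) j" and ?C\<^sub>1 = "A \<inter> block g (2 * j - 1)" and ?C\<^sub>2 = "A \<inter> block g (2 * j)"
  have "card ?R \<le> card (block_roots (Suc g) j)"
    by (rule card_mono) (auto simp: block_roots_def)
  also have "\<dots> \<le> 2" by (simp add: block_roots_def card_insert_if)
  finally have R: "card ?R \<le> 2" .
  have "A \<inter> block (Suc g) j = ?R \<union> ?C\<^sub>1 \<union> ?C\<^sub>2"
    using block_Suc[OF assms] by blast
  then have "card (A \<inter> block (Suc g) j) \<le> card (?R \<union> ?C\<^sub>1) + card ?C\<^sub>2"
    by (simp only: card_Un_le)
  also have "\<dots> \<le> card ?R + card ?C\<^sub>1 + card ?C\<^sub>2"
    using card_Un_le[of ?R ?C\<^sub>1] by simp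
  finally show ?thesis using R by simp
qed

lemma card_Int_block_children_le:
  assumes "finite E" "1 \<le> j"
  shows "card (E \<inter> block g (2 * j - 1)) + card (E \<inter> block g (2 * j)) \<le> card (E \<inter> block (Suc g) j)"
proof -
  have "card (E \<inter> block g (2 * j - 1)) + card (E \<inter> block g (2 * j))
      = card ((E \<inter> block g (2 * j - 1)) \<union> (E \<inter> block g (2 * j)))"
    using assms block_children_disjoint[OF assms(2), of g] by (intro card_Un_disjoint[symmetric]) auto
  also have "\<dots> \<le> card (E \<inter> block (Suc g) j)"
    using assms by (intro card_mono) (auto simp: block_Suc)
  finally show ?thesis .
qed

lemma card_block_one_le:
  assumes "1 \<le> j"
  shows "card (A \<inter> block 1 j) \<le> 4"
proof -
  have singleton: "card (A \<inter> {x}) \<le> 1" for x :: "int \<times> nat"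
    by (cases "x \<in> A") auto
  have "card (A \<inter> block 1 j) \<le> 2 + card (A \<inter> {(0, 2 * j - 1)}) + card (A \<inter> {(0, 2 * j)})"
    using card_Int_block_Suc_le[OF assms, of A 0] assms by (simp add: block_zero)
  then show ?thesis using singleton[of "(0, 2 * j - 1)"] singleton[of "(0, 2 * j)"] by linarith
qed

definition path_block_bound :: "nat \<Rightarrow> nat \<Rightarrow> nat" where
  "path_block_bound h e =
     (if e = 0 then 2 * h + 2 else if e = 1 then h\<^sup>2 + 3 * h + 2 else 2 * h\<^sup>2 + 2 * h + 2)"

lemma path_block_bound_one: "4 \<le> path_block_bound 1 e"
  by (simp add: path_block_bound_def)

lemma path_block_bound_Suc:
  assumes "e\<^sub>1 + e\<^sub>2 \<le> e" "1 \<le> e" "e \<le> 2"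
  shows "2 + path_block_bound g e\<^sub>1 + path_block_bound g e\<^sub>2 \<le> path_block_bound (Suc g) e"
proof -
  have "e\<^sub>1 \<in> {0, 1, 2}" "e\<^sub>2 \<in> {0, 1, 2}" "e \<in> {1, 2}" using assms by auto
  then show ?thesis using assms(1) by (auto simp: path_block_bound_def power2_eq_square)
qed

lemma path_block_bound_le: "path_block_bound h e \<le> 2 * h\<^sup>2 + 2 * h + 2"
  by (simp add: path_block_bound_def power2_eq_square)

lemma card_endpoints_le_two: "card ({hd p, last p} \<inter> A) \<le> 2"
proof -
  have "card ({hd p, last p} \<inter> A) \<le> card {hd p, last p}" by (rule card_mono) auto
  also have "\<dots> \<le> 2" by (simp add: card_insert_if)
  finally show ?thesis .
qed

lemma card_H_path_Int_block_le:
  assumes path: "H_path l p" and "1 \<le> h" "1 \<le> j"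
  shows "card (set p \<inter> block h j) \<le> path_block_bound h (card ({hd p, last p} \<inter> block h j))"
  using assms(2,3)
proof (induction h arbitrary: j rule: nat_induct_at_least)
  case base
  then show ?case using card_block_one_le path_block_bound_one order_trans by blast
next
  case (Suc g)
  let ?E = "{hd p, last p}" and ?C\<^sub>1 = "block g (2 * j - 1)" and ?C\<^sub>2 = "block g (2 * j)"
  let ?e = "card (?E \<inter> block (Suc g) j)"
  have "1 \<le> 2 * j - 1" "1 \<le> 2 * j" using Suc.prems by simp_all
  then have IH\<^sub>1: "card (set p \<inter> ?C\<^sub>1) \<le> path_block_bound g (card (?E \<inter> ?C\<^sub>1))"
    and IH\<^sub>2: "card (set p \<inter> ?C\<^sub>2) \<le> path_block_bound g (card (?E \<inter> ?C\<^sub>2))"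
    using Suc.IH by blast+
  have split: "card (set p \<inter> block (Suc g) j) \<le> 2 + card (set p \<inter> ?C\<^sub>1) + card (set p \<inter> ?C\<^sub>2)"
    using card_Int_block_Suc_le[OF Suc.prems] .
  have ends: "card (?E \<inter> ?C\<^sub>1) + card (?E \<inter> ?C\<^sub>2) \<le> ?e"
    using card_Int_block_children_le[OF _ Suc.prems] by simp
  show ?case
  proof (cases "?e = 0")
    case False
    then have "1 \<le> ?e" by linarith
    then have "2 + path_block_bound g (card (?E \<inter> ?C\<^sub>1)) + path_block_bound g (card (?E \<inter> ?C\<^sub>2))
        \<le> path_block_bound (Suc g) ?e"
      using path_block_bound_Suc[OF ends _ card_endpoints_le_two] by blast
    then show ?thesis using split IH\<^sub>1 IH\<^sub>2 by linarith
  next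
    case True
    then have "?E \<inter> ?C\<^sub>1 = {}" "?E \<inter> ?C\<^sub>2 = {}" using ends by auto
    then have "set p \<inter> ?C\<^sub>1 = {} \<or> set p \<inter> ?C\<^sub>2 = {}"
      using H_path_avoids_a_sibling_block[OF path \<open>1 \<le> g\<close> Suc.prems] by blast
    then have "card (set p \<inter> block (Suc g) j) \<le> 2 + path_block_bound g 0"
      using split IH\<^sub>1 IH\<^sub>2 \<open>?E \<inter> ?C\<^sub>1 = {}\<close> \<open>?E \<inter> ?C\<^sub>2 = {}\<close> by auto
    then show ?thesis using True by (simp add: path_block_bound_def)
  qed
qed

theorem theorem4:
  fixes l :: nat and p :: "(int \<times> nat) list"
  assumes "l \<ge> 1" and "H_path l p"
  shows "length p - 1 \<le> 2 * l ^ 2 + 4 * l + 7"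
proof -
  have "distinct p" "set p \<subseteq> H_vert l" using assms(2) by (auto simp: H_path_def)
  then have "length p = card (set p \<inter> block l 1)"
    using H_vert_subset_block distinct_card by (metis inf.absorb1 order_trans)
  also have "\<dots> \<le> path_block_bound l (card ({hd p, last p} \<inter> block l 1))"
    using card_H_path_Int_block_le[OF assms(2,1)] by simp
  also have "\<dots> \<le> 2 * l\<^sup>2 + 2 * l + 2" by (rule path_block_bound_le)
  finally show ?thesis by simp
qed

end
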